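(* In any generalized functional theory $(V,\mathcal H,\iota,W)$, the set of pure-state $v$-representable densities which are not uniquely $v$-representable has (Lebesgue) measure zero in the affine space $\mathrm{aff}(\iota^*(\mathcal P))$.
   Context: A generalized functional theory is a tuple $(V,\mathcal H,\iota,W)$ with $V$ a finite-dimensional real vector space, $\mathcal H$ a finite-dimensional complex Hilbert space, $\iota:V\to i\mathfrak u(\mathcal H)$ a linear map into the Hermitian operators, and $W$ Hermitian. Density operators are regarded as elements of $(i\mathfrak u(\mathcal H))^*$ via the trace pairing; $\iota^*$ is the dual map; $\mathcal P$ is the set of pure states. For $v\in V$, $\mathbf G_p(v)$ is the set of pure ground states of $\iota(v)+W$. A density $\rho\in V^*$ is pure-state $v$-representable if $\rho\in\iota^*(\mathbf G_p(v))$ for some $v$; it is uniquely $v$-representable if moreover any $v'$ with $\rho\in\iota^*(\mathbf G_p(v'))$ satisfies $\iota(v')-\iota(v)\propto\mathbb 1$. *)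

theory Defs
  imports "HOL-Analysis.Analysis"
begin

text \<open>Hilbert space H = complex^'h ('h a finite index type); operators on H are
  matrices complex^'h^'h. V is a finite-dimensional real inner product space 'v;
  its dual V* is identified with 'v via the inner product (Riesz).\<close>

definition hermitian :: "complex^'h^'h \<Rightarrow> bool" where
  "hermitian A \<longleftrightarrow> (\<forall>i j. A $ i $ j = cnj (A $ j $ i))"

definition unit_vec :: "complex^'h \<Rightarrow> bool" where
  "unit_vec \<psi> \<longleftrightarrow> (\<Sum>i\<in>UNIV. (cmod (\<psi> $ i))^2) = 1"

definition ket_bra :: "complex^'h \<Rightarrow> complex^'h^'h" where
  "ket_bra \<psi> = (\<chi> i j. \<psi> $ i * cnj (\<psi> $ j))"

definition pure_states :: "(complex^'h^'h) set" where
  "pure_states = {ket_bra \<psi> | \<psi>. unit_vec \<psi>}"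

definition energy :: "complex^'h^'h \<Rightarrow> complex^'h^'h \<Rightarrow> real" where
  "energy \<Gamma> Hm = Re (trace (\<Gamma> ** Hm))"

definition pure_ground_states :: "complex^'h^'h \<Rightarrow> (complex^'h^'h) set" where
  "pure_ground_states Hm =
     {\<Gamma> \<in> pure_states. \<forall>\<Gamma>'\<in>pure_states. energy \<Gamma> Hm \<le> energy \<Gamma>' Hm}"

definition Gp :: "('v \<Rightarrow> complex^'h^'h) \<Rightarrow> complex^'h^'h \<Rightarrow> 'v \<Rightarrow> (complex^'h^'h) set" where
  "Gp \<iota> W v = pure_ground_states (\<iota> v + W)"

text \<open>The dual map iota^*: a density operator Gamma is sent to the functional
  v |-> tr(Gamma iota(v)) on V, represented (via the inner product) as a vector of 'v.\<close>
definition iota_star :: "('v::euclidean_space \<Rightarrow> complex^'h^'h) \<Rightarrow> complex^'h^'h \<Rightarrow> 'v" where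
  "iota_star \<iota> \<Gamma> = (\<Sum>b\<in>Basis. Re (trace (\<Gamma> ** \<iota> b)) *\<^sub>R b)"

definition gen_functional_theory :: "('v::euclidean_space \<Rightarrow> complex^'h^'h) \<Rightarrow> complex^'h^'h \<Rightarrow> bool" where
  "gen_functional_theory \<iota> W \<longleftrightarrow> linear \<iota> \<and> (\<forall>v. hermitian (\<iota> v)) \<and> hermitian W"

definition pure_v_rep :: "('v::euclidean_space \<Rightarrow> complex^'h^'h) \<Rightarrow> complex^'h^'h \<Rightarrow> 'v \<Rightarrow> bool" where
  "pure_v_rep \<iota> W \<rho> \<longleftrightarrow> (\<exists>v. \<rho> \<in> iota_star \<iota> ` Gp \<iota> W v)"

definition uniquely_v_rep :: "('v::euclidean_space \<Rightarrow> complex^'h^'h) \<Rightarrow> complex^'h^'h \<Rightarrow> 'v \<Rightarrow> bool" where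
  "uniquely_v_rep \<iota> W \<rho> \<longleftrightarrow> (\<exists>v. \<rho> \<in> iota_star \<iota> ` Gp \<iota> W v \<and>
      (\<forall>v'. \<rho> \<in> iota_star \<iota> ` Gp \<iota> W v' \<longrightarrow> (\<exists>c. \<iota> v' - \<iota> v = mat c)))"

text \<open>S has Lebesgue measure zero inside the affine subspace A of 'v: S is contained in A
  and the thickening of S by the orthogonal complement of the direction space of A
  is a Lebesgue null set of 'v (Fubini: Lebesgue measure on 'v is the product of the
  Lebesgue measures on the direction of A and on its orthogonal complement).\<close>
definition aff_null :: "'v::euclidean_space set \<Rightarrow> 'v set \<Rightarrow> bool" where
  "aff_null A S \<longleftrightarrow> S \<subseteq> A \<and>
     {x + y | x y. x \<in> S \<and> y \<in> orthogonal_comp {a - b | a b. a \<in> A \<and> b \<in> A}}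
       \<in> null_sets lebesgue"

end

theory Submission
  imports Defs
begin

(* The ground-state energy E(v) is a minimum of affine functions of v and ground-state densities
   are its supergradients, so the relation "rho is a ground-state density at v" is antimonotone:
   (rho1 - rho2) . (v1 - v2) <= 0.  By Minty's trick z = v - rho then determines rho, and rho is
   1-Lipschitz in z.  A density that is not uniquely v-representable is represented by a whole
   segment of potentials in a direction u with iota u not scalar, i.e. u is not a gauge direction
   (one orthogonal to the affine hull of the pure-state densities).  After projecting out the gauge
   directions, every point of the bad set thickened by the gauge directions has a nondegenerate
   segment of Minty coordinates, which meets one of countably many rational coordinate
   hyperplanes; so this set is covered by countably many Lipschitz images of null sets. *)

section \<open>Euclidean geometry and antimonotone relations\<close>

lemma inner_eq_if_orthogonal_affine_hull_directions:
  fixes X :: "'a::real_inner set"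
  assumes "m \<in> orthogonal_comp {a - b | a b. a \<in> affine hull X \<and> b \<in> affine hull X}"
    and "x \<in> X" "y \<in> X"
  shows "x \<bullet> m = y \<bullet> m"
proof -
  have "x - y \<in> {a - b | a b. a \<in> affine hull X \<and> b \<in> affine hull X}"
    using assms(2,3) by (blast intro: hull_inc)
  then have "(x - y) \<bullet> m = 0"
    using assms(1) by (simp add: orthogonal_comp_def orthogonal_def)
  then show ?thesis
    by (simp add: inner_diff_left)
qed

lemma orthogonal_projection_exists:
  fixes N :: "'a::euclidean_space set"
  assumes N: "subspace N"
  obtains Q where "linear Q" "\<And>x. Q x \<in> N" "\<And>x. x - Q x \<in> orthogonal_comp N"
    "\<And>m. m \<in> N \<Longrightarrow> Q m = m" "\<And>x. 0 \<le> Q x \<bullet> x"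
proof -
  have decomp: "\<exists>!y. y \<in> N \<and> x - y \<in> orthogonal_comp N" for x
  proof (rule ex_ex1I)
    obtain y z where "y \<in> N" "z \<in> orthogonal_comp N" "x = y + z"
      using subspace_sum_orthogonal_comp[OF N] set_plus_elim by blast
    then show "\<exists>y. y \<in> N \<and> x - y \<in> orthogonal_comp N"
      by (metis add_diff_cancel_left')
  next
    fix y1 y2
    assume y1: "y1 \<in> N \<and> x - y1 \<in> orthogonal_comp N" and y2: "y2 \<in> N \<and> x - y2 \<in> orthogonal_comp N"
    have "(x - y1) - (x - y2) \<in> orthogonal_comp N"
      using y1 y2 by (blast intro: subspace_diff[OF subspace_orthogonal_comp])
    then have "y2 - y1 \<in> N \<inter> orthogonal_comp N"
      using y1 y2 by (simp add: subspace_diff[OF N])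
    then show "y1 = y2"
      by (simp add: orthogonal_Int_0[OF N])
  qed
  define Q where "Q x = (THE y. y \<in> N \<and> x - y \<in> orthogonal_comp N)" for x
  have Q: "Q x \<in> N" "x - Q x \<in> orthogonal_comp N" for x
    using theI'[OF decomp[of x]] unfolding Q_def by auto
  have Q_eq: "Q x = y" if "y \<in> N" "x - y \<in> orthogonal_comp N" for x y
    unfolding Q_def using that by (intro the1_equality[OF decomp]) auto
  have "linear Q"
  proof (rule linearI)
    fix x y
    have "(x - Q x) + (y - Q y) \<in> orthogonal_comp N"
      by (intro subspace_add[OF subspace_orthogonal_comp] Q)
    then show "Q (x + y) = Q x + Q y"
      by (intro Q_eq) (simp_all add: subspace_add[OF N] Q algebra_simps)
  next
    fix c x
    have "c *\<^sub>R (x - Q x) \<in> orthogonal_comp N"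
      by (intro subspace_scale[OF subspace_orthogonal_comp] Q)
    then show "Q (c *\<^sub>R x) = c *\<^sub>R Q x"
      by (intro Q_eq) (simp_all add: subspace_scale[OF N] Q scaleR_diff_right)
  qed
  moreover have "Q m = m" if "m \<in> N" for m
    using that by (intro Q_eq) (simp_all add: subspace_0[OF subspace_orthogonal_comp])
  moreover have "0 \<le> Q x \<bullet> x" for x
  proof -
    have "Q x \<bullet> (x - Q x) = 0"
      using Q[of x] by (simp add: orthogonal_comp_def orthogonal_def)
    then show ?thesis
      by (simp add: inner_diff_right)
  qed
  ultimately show thesis
    using Q that by blast
qed

lemma norm_le_norm_diff_if_inner_nonpos:
  fixes x y :: "'a::real_inner"
  assumes "x \<bullet> y \<le> 0"
  shows "norm x \<le> norm (y - x)"
proof -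
  have "(y - x) \<bullet> (y - x) = x \<bullet> x + (y \<bullet> y - 2 * (x \<bullet> y))"
    by (simp add: inner_diff_left inner_diff_right inner_commute)
  then have "x \<bullet> x \<le> (y - x) \<bullet> (y - x)"
    using assms inner_ge_zero[of y] by linarith
  then show ?thesis
    by (simp add: norm_le)
qed

lemma antimonotone_Minty_Lipschitz:
  fixes R :: "'a::real_inner \<Rightarrow> 'a \<Rightarrow> bool"
  assumes anti: "\<And>v1 x1 v2 x2. R v1 x1 \<Longrightarrow> R v2 x2 \<Longrightarrow> (x1 - x2) \<bullet> (v1 - v2) \<le> 0"
    and "R v1 x1" "R v2 x2"
  shows "norm (x1 - x2) \<le> norm ((v1 - x1) - (v2 - x2))"
proof -
  have "(v1 - x1) - (v2 - x2) = (v1 - v2) - (x1 - x2)"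
    by (simp add: algebra_simps)
  then show ?thesis
    using norm_le_norm_diff_if_inner_nonpos[OF anti[OF assms(2,3)]] by metis
qed

lemma antimonotone_Minty_inverse:
  fixes R :: "'a::real_inner \<Rightarrow> 'a \<Rightarrow> bool"
  assumes anti: "\<And>v1 x1 v2 x2. R v1 x1 \<Longrightarrow> R v2 x2 \<Longrightarrow> (x1 - x2) \<bullet> (v1 - v2) \<le> 0"
  obtains \<phi> where "\<And>v x. R v x \<Longrightarrow> \<phi> (v - x) = x"
proof
  fix v x assume "R v x"
  show "(THE x'. \<exists>v'. R v' x' \<and> v - x = v' - x') = x"
  proof (rule the_equality)
    fix x' assume "\<exists>v'. R v' x' \<and> v - x = v' - x'"
    then show "x' = x"
      using antimonotone_Minty_Lipschitz[of R, OF anti \<open>R v x\<close>] by force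
  qed (use \<open>R v x\<close> in blast)
qed

lemma negligible_Lipschitz_image:
  fixes f :: "'m::euclidean_space \<Rightarrow> 'n::euclidean_space"
  assumes "DIM('m) \<le> DIM('n)" "negligible S"
    and "\<And>x y. x \<in> S \<Longrightarrow> y \<in> S \<Longrightarrow> norm (f x - f y) \<le> B * norm (x - y)"
  shows "negligible (f ` S)"
  using assms by (intro negligible_locally_Lipschitz_image) (auto intro!: exI[of _ UNIV])

lemma segment_meets_Rats:
  fixes \<alpha> \<delta> :: real
  assumes "\<delta> \<noteq> 0"
  obtains t where "0 \<le> t" "t \<le> 1" "\<alpha> + t * \<delta> \<in> \<rat>"
proof -
  have "min \<alpha> (\<alpha> + \<delta>) < max \<alpha> (\<alpha> + \<delta>)"
    using assms by (auto simp: min_def max_def)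
  then obtain q where q: "q \<in> \<rat>" "min \<alpha> (\<alpha> + \<delta>) < q" "q < max \<alpha> (\<alpha> + \<delta>)"
    using Rats_dense_in_real by blast
  show thesis
  proof (rule that[of "(q - \<alpha>) / \<delta>"])
    show "0 \<le> (q - \<alpha>) / \<delta>" "(q - \<alpha>) / \<delta> \<le> 1"
      using q assms by (auto simp: field_simps min_def max_def split: if_splits)
    show "\<alpha> + (q - \<alpha>) / \<delta> * \<delta> \<in> \<rat>"
      using q assms by simp
  qed
qed

lemma negligible_antimonotone_segment_points:
  fixes R :: "'a::euclidean_space \<Rightarrow> 'a \<Rightarrow> bool"
  assumes anti: "\<And>v1 x1 v2 x2. R v1 x1 \<Longrightarrow> R v2 x2 \<Longrightarrow> (x1 - x2) \<bullet> (v1 - v2) \<le> 0"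
  shows "negligible {x. \<exists>v u. u \<noteq> 0 \<and> (\<forall>t\<in>{0..1}. R (v + t *\<^sub>R u) x)}"
proof -
  obtain \<phi> where \<phi>: "\<And>v x. R v x \<Longrightarrow> \<phi> (v - x) = x"
    using antimonotone_Minty_inverse[of R] anti by blast
  define Z where "Z = {v - x | v x. R v x}"
  have Lipschitz: "norm (\<phi> z1 - \<phi> z2) \<le> norm (z1 - z2)" if "z1 \<in> Z" "z2 \<in> Z" for z1 z2
    using that antimonotone_Minty_Lipschitz[of R, OF anti] unfolding Z_def by (auto simp: \<phi>)
  define F where "F = (\<lambda>(b, q). \<phi> ` (Z \<inter> {z. b \<bullet> z = q})) ` (Basis \<times> \<rat>)"
  have "countable F"
    unfolding F_def by (intro countable_image countable_SIGMA countable_rat countable_finite) auto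
  moreover have "negligible X" if "X \<in> F" for X
  proof -
    obtain b q where "b \<in> Basis" and X: "X = \<phi> ` (Z \<inter> {z. b \<bullet> z = q})"
      using \<open>X \<in> F\<close> unfolding F_def by auto
    then have "negligible (Z \<inter> {z. b \<bullet> z = q})"
      by (intro negligible_subset[OF negligible_hyperplane[of b q]]) auto
    then show ?thesis
      unfolding X using Lipschitz by (intro negligible_Lipschitz_image[where B = 1]) auto
  qed
  moreover have "{x. \<exists>v u. u \<noteq> 0 \<and> (\<forall>t\<in>{0..1}. R (v + t *\<^sub>R u) x)} \<subseteq> \<Union>F"
  proof
    fix x assume "x \<in> {x. \<exists>v u. u \<noteq> 0 \<and> (\<forall>t\<in>{0..1}. R (v + t *\<^sub>R u) x)}"
    then obtain v u where "u \<noteq> 0" and segment: "\<And>t. t \<in> {0..1} \<Longrightarrow> R (v + t *\<^sub>R u) x"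
      by blast
    then obtain b where b: "b \<in> Basis" "b \<bullet> u \<noteq> 0"
      using euclidean_all_zero_iff[of u] by (auto simp: inner_commute)
    then obtain t where t: "t \<in> {0..1}" "b \<bullet> (v - x) + t * (b \<bullet> u) \<in> \<rat>"
      using segment_meets_Rats[of "b \<bullet> u" "b \<bullet> (v - x)"] by auto
    define z where "z = v + t *\<^sub>R u - x"
    have "R (v + t *\<^sub>R u) x"
      using segment[OF t(1)] .
    then have "z \<in> Z" "\<phi> z = x"
      unfolding z_def Z_def by (auto simp: \<phi>)
    moreover have "b \<bullet> z = b \<bullet> (v - x) + t * (b \<bullet> u)"
      unfolding z_def by (simp add: inner_diff_right inner_add_right)
    ultimately have "x \<in> \<phi> ` (Z \<inter> {z. b \<bullet> z = b \<bullet> (v - x) + t * (b \<bullet> u)})"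
      by auto
    then show "x \<in> \<Union>F"
      unfolding F_def using b t(2) by blast
  qed
  ultimately show ?thesis
    using negligible_countable_Union negligible_subset by blast
qed

lemma antimonotone_diff_positive_linear:
  fixes R :: "'a::real_inner \<Rightarrow> 'a \<Rightarrow> bool"
  assumes anti: "\<And>v1 x1 v2 x2. R v1 x1 \<Longrightarrow> R v2 x2 \<Longrightarrow> (x1 - x2) \<bullet> (v1 - v2) \<le> 0"
    and Q: "linear Q" "\<And>w. 0 \<le> Q w \<bullet> w"
    and "R v1 x1" "R v2 x2"
  shows "((x1 - Q v1) - (x2 - Q v2)) \<bullet> (v1 - v2) \<le> 0"
proof -
  have "((x1 - Q v1) - (x2 - Q v2)) \<bullet> (v1 - v2) = (x1 - x2) \<bullet> (v1 - v2) - Q (v1 - v2) \<bullet> (v1 - v2)"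
    by (simp add: linear_diff[OF Q(1)] inner_diff_left)
  then show ?thesis
    using anti[OF assms(4,5)] Q(2)[of "v1 - v2"] by linarith
qed

lemma negligible_antimonotone_segment_points_plus_subspace:
  fixes R :: "'a::euclidean_space \<Rightarrow> 'a \<Rightarrow> bool"
  assumes anti: "\<And>v1 x1 v2 x2. R v1 x1 \<Longrightarrow> R v2 x2 \<Longrightarrow> (x1 - x2) \<bullet> (v1 - v2) \<le> 0"
    and N: "subspace N"
    and shift: "\<And>v x m. R v x \<Longrightarrow> m \<in> N \<Longrightarrow> R (v + m) x"
  shows "negligible {x + y | x y. y \<in> N \<and> (\<exists>v u. u \<notin> N \<and> (\<forall>t\<in>{0..1}. R (v + t *\<^sub>R u) x))}"
proof -
  obtain Q where Q: "linear Q" "\<And>x. Q x \<in> N" "\<And>x. x - Q x \<in> orthogonal_comp N"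
    and Q_id: "\<And>m. m \<in> N \<Longrightarrow> Q m = m" and Q_nonneg: "\<And>w. 0 \<le> Q w \<bullet> w"
    using orthogonal_projection_exists[OF N] by blast
  \<comment> \<open>In the coordinates x - Q v, invariance under shifting v by N becomes translation of x by N.\<close>
  define R' where "R' v x' \<longleftrightarrow> (\<exists>x. R v x \<and> x' = x - Q v)" for v x'
  have "negligible {x'. \<exists>v u. u \<noteq> 0 \<and> (\<forall>t\<in>{0..1}. R' (v + t *\<^sub>R u) x')}"
    using antimonotone_diff_positive_linear[of R, OF anti Q(1) Q_nonneg]
    by (intro negligible_antimonotone_segment_points) (auto simp: R'_def)
  moreover have "{x + y | x y. y \<in> N \<and> (\<exists>v u. u \<notin> N \<and> (\<forall>t\<in>{0..1}. R (v + t *\<^sub>R u) x))}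
      \<subseteq> {x'. \<exists>v u. u \<noteq> 0 \<and> (\<forall>t\<in>{0..1}. R' (v + t *\<^sub>R u) x')}"
  proof clarify
    fix x y v u
    assume y: "y \<in> N" and u: "u \<notin> N" and segment: "\<forall>t\<in>{0..1}. R (v + t *\<^sub>R u) x"
    have "R' ((v - Q v - y) + t *\<^sub>R (u - Q u)) (x + y)" if "t \<in> {0..1}" for t
    proof -
      define w where "w = v + t *\<^sub>R u"
      have shifted: "(v - Q v - y) + t *\<^sub>R (u - Q u) = w + (- Q w - y)"
        unfolding w_def by (simp add: linear_add[OF Q(1)] linear_scale[OF Q(1)] algebra_simps)
      have m: "- Q w - y \<in> N"
        using N Q(2) y by (simp add: subspace_diff subspace_neg)
      have "R (w + (- Q w - y)) x"
        using shift[OF segment[rule_format, OF that] m] unfolding w_def .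
      moreover have "x + y = x - Q (w + (- Q w - y))"
        using Q_id[OF m] by (simp add: linear_add[OF Q(1)])
      ultimately show ?thesis
        unfolding R'_def shifted by blast
    qed
    moreover have "u - Q u \<noteq> 0"
      using u Q(2)[of u] by auto
    ultimately show "\<exists>v' u'. u' \<noteq> 0 \<and> (\<forall>t\<in>{0..1}. R' (v' + t *\<^sub>R u') (x + y))"
      by blast
  qed
  ultimately show ?thesis
    by (rule negligible_subset)
qed

section \<open>Expectation values of Hermitian matrices\<close>

lemma sum_UNIV_eq_sum_support:
  fixes f :: "'a::finite \<Rightarrow> 'b::comm_monoid_add"
  assumes "\<forall>k. k \<notin> T \<longrightarrow> f k = 0"
  shows "(\<Sum>k\<in>UNIV. f k) = (\<Sum>k\<in>T. f k)"
  using assms by (intro sum.mono_neutral_right) auto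

lemma trace_ket_bra_mult:
  "trace (ket_bra \<psi> ** M) = (\<Sum>i\<in>UNIV. \<Sum>j\<in>UNIV. \<psi>$i * cnj (\<psi>$j) * M$j$i)"
  by (simp add: trace_def matrix_matrix_mult_def ket_bra_def sum_distrib_left mult.assoc)

lemma trace_ket_bra_axis: "trace (ket_bra (axis i a) ** M) = a * cnj a * M$i$i"
  by (simp add: trace_ket_bra_mult sum_UNIV_eq_sum_support[of "{i}"] axis_def)

lemma trace_ket_bra_axis_add:
  assumes "i \<noteq> j"
  shows "trace (ket_bra (axis i a + axis j b) ** M)
     = a * cnj a * M$i$i + a * cnj b * M$j$i + b * cnj a * M$i$j + b * cnj b * M$j$j"
  using assms
  by (simp add: trace_ket_bra_mult sum_UNIV_eq_sum_support[of "{i, j}"] axis_def algebra_simps)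

lemma unit_vec_axis: "unit_vec (axis i a) \<longleftrightarrow> (cmod a)^2 = 1"
  by (simp add: unit_vec_def sum_UNIV_eq_sum_support[of "{i}"] axis_def)

lemma unit_vec_axis_add:
  assumes "i \<noteq> j"
  shows "unit_vec (axis i a + axis j b) \<longleftrightarrow> (cmod a)^2 + (cmod b)^2 = 1"
  using assms by (simp add: unit_vec_def sum_UNIV_eq_sum_support[of "{i, j}"] axis_def)

lemma hermitian_eq_mat_if_constant_expectation:
  fixes M :: "complex^'h^'h"
  assumes herm: "hermitian M"
    and const: "\<And>\<psi>. unit_vec \<psi> \<Longrightarrow> Re (trace (ket_bra \<psi> ** M)) = r"
  shows "M = mat (complex_of_real r)"
proof -
  have cnj_M: "M$j$i = cnj (M$i$j)" for i j
    using herm unfolding hermitian_def by blast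
  have diag: "M$i$i = complex_of_real r" for i
    using const[of "axis i 1"] cnj_M[of i i]
    by (simp add: unit_vec_axis trace_ket_bra_axis complex_eq_iff)
  have off_diag: "M$i$j = 0" if "i \<noteq> j" for i j
  proof -
    define s where "s = complex_of_real (sqrt (1/2))"
    have s: "s * cnj s = 1/2" "(cmod s)^2 = 1/2"
      by (simp_all add: s_def power2_eq_square flip: of_real_mult)
    have "Re (M$i$j) = 0"
      using const[of "axis i s + axis j s"] that s diag cnj_M[of i j]
      by (simp add: unit_vec_axis_add trace_ket_bra_axis_add)
    moreover have "Im (M$i$j) = 0"
      using const[of "axis i s + axis j (\<i> * s)"] that s diag cnj_M[of i j]
      by (simp add: unit_vec_axis_add trace_ket_bra_axis_add norm_mult algebra_simps)
    ultimately show ?thesis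
      by (simp add: complex_eq_iff)
  qed
  show ?thesis
    using diag off_diag by (simp add: vec_eq_iff mat_def)
qed

lemma linear_Re_trace_mult: "linear (\<lambda>M. Re (trace (G ** M)))"
  by (rule linearI) (simp_all add: trace_def matrix_matrix_mult_def sum.distrib distrib_left
       sum_distrib_left vector_scaleR_component algebra_simps)

section \<open>Ground-state densities\<close>

lemma inner_iota_star:
  assumes "linear \<iota>"
  shows "iota_star \<iota> G \<bullet> u = Re (trace (G ** \<iota> u))"
proof -
  let ?f = "\<lambda>u. Re (trace (G ** \<iota> u))"
  have "linear ?f"
    using linear_compose[OF assms linear_Re_trace_mult] by (simp add: o_def)
  have "?f u = ?f (\<Sum>b\<in>Basis. (u \<bullet> b) *\<^sub>R b)"
    by (simp add: euclidean_representation)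
  also have "\<dots> = (\<Sum>b\<in>Basis. (u \<bullet> b) * ?f b)"
    by (simp add: linear_sum[OF \<open>linear ?f\<close>] linear_scale[OF \<open>linear ?f\<close>])
  finally show ?thesis
    by (simp add: iota_star_def inner_sum_right inner_commute mult.commute)
qed

lemma energy_iota_add:
  assumes "linear \<iota>"
  shows "energy G (\<iota> v + W) = iota_star \<iota> G \<bullet> v + energy G W"
  using linear_add[OF linear_Re_trace_mult, of G "\<iota> v" W]
  by (simp add: energy_def inner_iota_star[OF assms])

lemma mem_Gp_iff:
  assumes "linear \<iota>"
  shows "\<Gamma> \<in> Gp \<iota> W v \<longleftrightarrow> \<Gamma> \<in> pure_states \<and> (\<forall>\<Gamma>'\<in>pure_states.
     iota_star \<iota> \<Gamma> \<bullet> v + energy \<Gamma> W \<le> iota_star \<iota> \<Gamma>' \<bullet> v + energy \<Gamma>' W)"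
  by (simp add: Gp_def pure_ground_states_def energy_iota_add[OF assms])

lemma Gp_in_pure_states: "\<Gamma> \<in> Gp \<iota> W v \<Longrightarrow> \<Gamma> \<in> pure_states"
  by (simp add: Gp_def pure_ground_states_def)

lemma iota_star_Gp_antimonotone:
  assumes "linear \<iota>" "\<rho>1 \<in> iota_star \<iota> ` Gp \<iota> W v1" "\<rho>2 \<in> iota_star \<iota> ` Gp \<iota> W v2"
  shows "(\<rho>1 - \<rho>2) \<bullet> (v1 - v2) \<le> 0"
proof -
  obtain \<Gamma>1 \<Gamma>2 where \<Gamma>: "\<Gamma>1 \<in> Gp \<iota> W v1" "\<Gamma>2 \<in> Gp \<iota> W v2"
    and \<rho>: "\<rho>1 = iota_star \<iota> \<Gamma>1" "\<rho>2 = iota_star \<iota> \<Gamma>2"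
    using assms(2,3) by auto
  have "\<rho>1 \<bullet> v1 + energy \<Gamma>1 W \<le> \<rho>2 \<bullet> v1 + energy \<Gamma>2 W"
    "\<rho>2 \<bullet> v2 + energy \<Gamma>2 W \<le> \<rho>1 \<bullet> v2 + energy \<Gamma>1 W"
    using \<Gamma> unfolding \<rho> mem_Gp_iff[OF assms(1)] by auto
  then show ?thesis
    by (simp add: inner_diff_left inner_diff_right)
qed

lemma Gp_add_if_iota_star_constant:
  assumes "linear \<iota>" "\<Gamma> \<in> Gp \<iota> W v"
    and const: "\<And>\<Gamma>1 \<Gamma>2. \<Gamma>1 \<in> pure_states \<Longrightarrow> \<Gamma>2 \<in> pure_states \<Longrightarrow>
                  iota_star \<iota> \<Gamma>1 \<bullet> m = iota_star \<iota> \<Gamma>2 \<bullet> m"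
  shows "\<Gamma> \<in> Gp \<iota> W (v + m)"
proof -
  have pure: "\<Gamma> \<in> pure_states" and min: "\<forall>G\<in>pure_states.
      iota_star \<iota> \<Gamma> \<bullet> v + energy \<Gamma> W \<le> iota_star \<iota> G \<bullet> v + energy G W"
    using assms(2) mem_Gp_iff[OF assms(1)] by auto
  have "iota_star \<iota> \<Gamma> \<bullet> (v + m) + energy \<Gamma> W \<le> iota_star \<iota> G \<bullet> (v + m) + energy G W"
    if "G \<in> pure_states" for G
    using min[rule_format, OF that] const[OF pure that] by (simp add: inner_add_right)
  with pure show ?thesis
    using mem_Gp_iff[OF assms(1)] by blast
qed

lemma Gp_on_segment_if_iota_star_eq:
  assumes "linear \<iota>" "\<Gamma> \<in> Gp \<iota> W v1" "\<Gamma>' \<in> Gp \<iota> W v2" "iota_star \<iota> \<Gamma>' = iota_star \<iota> \<Gamma>"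
    and "0 \<le> t" "t \<le> 1"
  shows "\<Gamma> \<in> Gp \<iota> W (v1 + t *\<^sub>R (v2 - v1))"
proof -
  let ?e = "\<lambda>G v. iota_star \<iota> G \<bullet> v + energy G W"
  have pure: "\<Gamma> \<in> pure_states" and min1: "\<And>G. G \<in> pure_states \<Longrightarrow> ?e \<Gamma> v1 \<le> ?e G v1"
    using assms(2) mem_Gp_iff[OF assms(1)] by auto
  have pure': "\<Gamma>' \<in> pure_states"
    using Gp_in_pure_states[OF assms(3)] .
  have min2': "\<And>G. G \<in> pure_states \<Longrightarrow> ?e \<Gamma>' v2 \<le> ?e G v2"
    using assms(3) mem_Gp_iff[OF assms(1)] by auto
  have "?e \<Gamma> v2 = ?e \<Gamma> v1 + iota_star \<iota> \<Gamma> \<bullet> (v2 - v1)"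
    by (simp add: inner_diff_right)
  also have "\<dots> \<le> ?e \<Gamma>' v1 + iota_star \<iota> \<Gamma> \<bullet> (v2 - v1)"
    using min1[OF pure'] by simp
  also have "\<dots> = ?e \<Gamma>' v2"
    using assms(4) by (simp add: inner_diff_right)
  finally have min2: "?e \<Gamma> v2 \<le> ?e G v2" if "G \<in> pure_states" for G
    using min2'[OF that] by linarith
  have affine: "?e G (v1 + t *\<^sub>R (v2 - v1)) = (1 - t) * ?e G v1 + t * ?e G v2" for G
    by (simp add: inner_add_right inner_diff_right algebra_simps)
  have "?e \<Gamma> (v1 + t *\<^sub>R (v2 - v1)) \<le> ?e G (v1 + t *\<^sub>R (v2 - v1))" if "G \<in> pure_states" for G
  proof -
    have "(1 - t) * ?e \<Gamma> v1 \<le> (1 - t) * ?e G v1" "t * ?e \<Gamma> v2 \<le> t * ?e G v2"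
      using min1[OF that] min2[OF that] assms(5,6) by (simp_all add: mult_left_mono)
    then show ?thesis
      unfolding affine by linarith
  qed
  with pure show ?thesis
    using mem_Gp_iff[OF assms(1)] by blast
qed

lemma iota_eq_mat_if_iota_star_constant:
  fixes \<iota> :: "'v::euclidean_space \<Rightarrow> complex^'h^'h"
  assumes "linear \<iota>" "hermitian (\<iota> m)"
    and const: "\<And>\<Gamma>1 \<Gamma>2. \<Gamma>1 \<in> pure_states \<Longrightarrow> \<Gamma>2 \<in> pure_states \<Longrightarrow>
                  iota_star \<iota> \<Gamma>1 \<bullet> m = iota_star \<iota> \<Gamma>2 \<bullet> m"
  shows "\<exists>c. \<iota> m = mat c"
proof -
  define \<Gamma>0 :: "complex^'h^'h" where "\<Gamma>0 = ket_bra (axis undefined 1)"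
  have "\<Gamma>0 \<in> pure_states"
    unfolding \<Gamma>0_def pure_states_def by (auto simp: unit_vec_axis)
  have "Re (trace (ket_bra \<psi> ** \<iota> m)) = Re (trace (\<Gamma>0 ** \<iota> m))" if "unit_vec \<psi>" for \<psi>
  proof -
    have "ket_bra \<psi> \<in> pure_states"
      using that unfolding pure_states_def by blast
    then show ?thesis
      using const[OF _ \<open>\<Gamma>0 \<in> pure_states\<close>] by (simp add: inner_iota_star[OF assms(1)])
  qed
  then have "\<iota> m = mat (complex_of_real (Re (trace (\<Gamma>0 ** \<iota> m))))"
    by (rule hermitian_eq_mat_if_constant_expectation[OF assms(2)])
  then show ?thesis ..
qed

lemma not_uniquely_v_rep_segment:
  assumes "linear \<iota>" "pure_v_rep \<iota> W \<rho>" "\<not> uniquely_v_rep \<iota> W \<rho>"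
  obtains u v where "\<nexists>c. \<iota> u = mat c"
    and "\<And>t. t \<in> {0..1} \<Longrightarrow> \<rho> \<in> iota_star \<iota> ` Gp \<iota> W (v + t *\<^sub>R u)"
proof -
  obtain v1 \<Gamma>1 where \<Gamma>1: "\<Gamma>1 \<in> Gp \<iota> W v1" "\<rho> = iota_star \<iota> \<Gamma>1"
    using assms(2) unfolding pure_v_rep_def by auto
  then obtain v2 \<Gamma>2 where \<Gamma>2: "\<Gamma>2 \<in> Gp \<iota> W v2" "\<rho> = iota_star \<iota> \<Gamma>2"
    and not_scalar: "\<nexists>c. \<iota> v2 - \<iota> v1 = mat c"
    using assms(3) unfolding uniquely_v_rep_def by blast
  show thesis
  proof (rule that[of "v2 - v1" v1])
    show "\<nexists>c. \<iota> (v2 - v1) = mat c"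
      using not_scalar by (simp add: linear_diff[OF assms(1)])
    show "\<rho> \<in> iota_star \<iota> ` Gp \<iota> W (v1 + t *\<^sub>R (v2 - v1))" if "t \<in> {0..1}" for t
      using Gp_on_segment_if_iota_star_eq[OF assms(1) \<Gamma>1(1) \<Gamma>2(1)] \<Gamma>1(2) \<Gamma>2(2) that by auto
  qed
qed

lemma pure_v_rep_in_affine_hull:
  assumes "pure_v_rep \<iota> W \<rho>"
  shows "\<rho> \<in> affine hull (iota_star \<iota> ` pure_states)"
proof -
  obtain v \<Gamma> where \<Gamma>: "\<Gamma> \<in> Gp \<iota> W v" and \<rho>: "\<rho> = iota_star \<iota> \<Gamma>"
    using assms unfolding pure_v_rep_def by blast
  show ?thesis
    unfolding \<rho> by (intro hull_inc imageI Gp_in_pure_states[OF \<Gamma>])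
qed

(* The directions u with iota u a multiple of the identity: shifting the potential along them
   does not change the ground states. *)
definition gauge_directions :: "('v::euclidean_space \<Rightarrow> complex^'h^'h) \<Rightarrow> 'v set" where
  "gauge_directions \<iota> = orthogonal_comp {a - b | a b.
     a \<in> affine hull (iota_star \<iota> ` pure_states) \<and> b \<in> affine hull (iota_star \<iota> ` pure_states)}"

lemma iota_star_constant_on_gauge_directions:
  assumes "m \<in> gauge_directions \<iota>" "\<Gamma>1 \<in> pure_states" "\<Gamma>2 \<in> pure_states"
  shows "iota_star \<iota> \<Gamma>1 \<bullet> m = iota_star \<iota> \<Gamma>2 \<bullet> m"
  using assms(1) unfolding gauge_directions_def
  by (rule inner_eq_if_orthogonal_affine_hull_directions) (use assms(2,3) in auto)

lemma not_uniquely_v_rep_transversal_segment: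
  assumes "gen_functional_theory \<iota> W" "pure_v_rep \<iota> W \<rho>" "\<not> uniquely_v_rep \<iota> W \<rho>"
  shows "\<exists>v u. u \<notin> gauge_directions \<iota> \<and> (\<forall>t\<in>{0..1}. \<rho> \<in> iota_star \<iota> ` Gp \<iota> W (v + t *\<^sub>R u))"
proof -
  have lin: "linear \<iota>" and herm: "hermitian (\<iota> u)" for u
    using assms(1) unfolding gen_functional_theory_def by auto
  obtain u v where not_scalar: "\<nexists>c. \<iota> u = mat c"
    and segment: "\<And>t. t \<in> {0..1} \<Longrightarrow> \<rho> \<in> iota_star \<iota> ` Gp \<iota> W (v + t *\<^sub>R u)"
    using not_uniquely_v_rep_segment[OF lin assms(2,3)] by blast
  have "u \<notin> gauge_directions \<iota>"
    using iota_eq_mat_if_iota_star_constant[OF lin herm iota_star_constant_on_gauge_directions]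
      not_scalar by blast
  with segment show ?thesis
    by blast
qed

lemma negligible_thickened_Gp_segment_densities:
  assumes lin: "linear \<iota>"
  shows "negligible {x + y | x y. y \<in> gauge_directions \<iota> \<and>
    (\<exists>v u. u \<notin> gauge_directions \<iota> \<and> (\<forall>t\<in>{0..1}. x \<in> iota_star \<iota> ` Gp \<iota> W (v + t *\<^sub>R u)))}"
proof (rule negligible_antimonotone_segment_points_plus_subspace)
  show "(x1 - x2) \<bullet> (v1 - v2) \<le> 0"
    if "x1 \<in> iota_star \<iota> ` Gp \<iota> W v1" "x2 \<in> iota_star \<iota> ` Gp \<iota> W v2" for v1 x1 v2 x2
    using iota_star_Gp_antimonotone[OF lin that] .
  show "subspace (gauge_directions \<iota>)"
    unfolding gauge_directions_def by (rule subspace_orthogonal_comp)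
  show "x \<in> iota_star \<iota> ` Gp \<iota> W (v + m)"
    if "x \<in> iota_star \<iota> ` Gp \<iota> W v" "m \<in> gauge_directions \<iota>" for v x m
    using that Gp_add_if_iota_star_constant[OF lin _ iota_star_constant_on_gauge_directions]
    by blast
qed

theorem corollary2p21:
  fixes \<iota> :: "'v::euclidean_space \<Rightarrow> complex^'h^'h" and W :: "complex^'h^'h"
  assumes "gen_functional_theory \<iota> W"
  shows "aff_null (affine hull (iota_star \<iota> ` pure_states))
           {\<rho>. pure_v_rep \<iota> W \<rho> \<and> \<not> uniquely_v_rep \<iota> W \<rho>}"
proof -
  let ?S = "{\<rho>. pure_v_rep \<iota> W \<rho> \<and> \<not> uniquely_v_rep \<iota> W \<rho>}"
  have lin: "linear \<iota>"
    using assms unfolding gen_functional_theory_def by blast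
  have "{x + y | x y. x \<in> ?S \<and> y \<in> gauge_directions \<iota>} \<subseteq> {x + y | x y. y \<in> gauge_directions \<iota> \<and>
    (\<exists>v u. u \<notin> gauge_directions \<iota> \<and> (\<forall>t\<in>{0..1}. x \<in> iota_star \<iota> ` Gp \<iota> W (v + t *\<^sub>R u)))}"
    using not_uniquely_v_rep_transversal_segment[OF assms] by blast
  then have "negligible {x + y | x y. x \<in> ?S \<and> y \<in> gauge_directions \<iota>}"
    by (rule negligible_subset[OF negligible_thickened_Gp_segment_densities[OF lin]])
  moreover have "?S \<subseteq> affine hull (iota_star \<iota> ` pure_states)"
    using pure_v_rep_in_affine_hull by blast
  ultimately show ?thesis
    unfolding aff_null_def gauge_directions_def[symmetric] by (simp add: negligible_iff_null_sets)
qed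

end
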